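(* For every digraph $F$, $\mathrm{mad}_{\vec{\chi}}(F)\leq 4^{m-n+\mathrm{cc}(F)}(n-1)+1$, where $m=|A(F)|$, $n=|V(F)|$ and $\mathrm{cc}(F)$ is the number of connected components of the underlying graph of $F$.
   Context: $\vec{\chi}(D)$ is the dichromatic number (least $k$ such that $V(D)$ partitions into $k$ sets inducing acyclic subdigraphs). A subdivision of $F$ is obtained by replacing each arc $(x,y)$ by a directed $(x,y)$-path, internally disjoint with new internal vertices. $\mathrm{mad}_{\vec{\chi}}(F)$ is the least integer $c$ such that every digraph $D$ with $\vec{\chi}(D)\ge c$ contains a subdivision of $F$ as a subdigraph (such $c$ exists for every digraph $F$). *)

theory Defs
  imports Main
begin

text \<open>A (finite, loopless) digraph is given by a vertex set V and an arc set A \<subseteq> V \<times> V.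
  Digons (both (x,y) and (y,x)) are allowed; parallel arcs are not.\<close>
definition is_digraph :: "'a set \<Rightarrow> ('a \<times> 'a) set \<Rightarrow> bool" where
  "is_digraph V A \<longleftrightarrow> finite V \<and> A \<subseteq> V \<times> V \<and> (\<forall>x. (x, x) \<notin> A)"

definition acyclic_colouring :: "'a set \<Rightarrow> ('a \<times> 'a) set \<Rightarrow> nat \<Rightarrow> ('a \<Rightarrow> nat) \<Rightarrow> bool" where
  "acyclic_colouring V A k f \<longleftrightarrow>
     (\<forall>v\<in>V. f v < k) \<and>
     (\<forall>i<k. acyclic (A \<inter> ({v\<in>V. f v = i} \<times> {v\<in>V. f v = i})))"

definition dichromatic :: "'a set \<Rightarrow> ('a \<times> 'a) set \<Rightarrow> nat" where
  "dichromatic V A = (LEAST k. \<exists>f. acyclic_colouring V A k f)"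

definition is_dipath :: "('a \<times> 'a) set \<Rightarrow> 'a list \<Rightarrow> 'a \<Rightarrow> 'a \<Rightarrow> bool" where
  "is_dipath A P x y \<longleftrightarrow> distinct P \<and> length P \<ge> 2 \<and> hd P = x \<and> last P = y \<and>
     (\<forall>i. Suc i < length P \<longrightarrow> (P ! i, P ! Suc i) \<in> A)"

definition internal_vertices :: "'a list \<Rightarrow> 'a set" where
  "internal_vertices P = set (butlast (tl P))"

definition contains_subdivision ::
  "'b set \<Rightarrow> ('b \<times> 'b) set \<Rightarrow> 'a set \<Rightarrow> ('a \<times> 'a) set \<Rightarrow> bool" where
  "contains_subdivision VD AD VF AF \<longleftrightarrow>
     (\<exists>(\<phi> :: 'a \<Rightarrow> 'b) (P :: 'a \<times> 'a \<Rightarrow> 'b list).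
        inj_on \<phi> VF \<and> \<phi> ` VF \<subseteq> VD \<and>
        (\<forall>e\<in>AF. is_dipath AD (P e) (\<phi> (fst e)) (\<phi> (snd e)) \<and>
                 internal_vertices (P e) \<inter> \<phi> ` VF = {}) \<and>
        (\<forall>e\<in>AF. \<forall>e'\<in>AF. e \<noteq> e' \<longrightarrow>
                 internal_vertices (P e) \<inter> internal_vertices (P e') = {}))"

text \<open>Host digraphs are taken with vertices in nat (every finite
  digraph is isomorphic to one of these).\<close>
definition mad_chi :: "'a set \<Rightarrow> ('a \<times> 'a) set \<Rightarrow> nat" where
  "mad_chi VF AF = (LEAST c. \<forall>(VD :: nat set) AD.
       is_digraph VD AD \<and> dichromatic VD AD \<ge> c \<longrightarrow> contains_subdivision VD AD VF AF)"

definition num_cc :: "'a set \<Rightarrow> ('a \<times> 'a) set \<Rightarrow> nat" where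
  "num_cc V A = card (V // (((A \<union> A\<inverse>)\<^sup>*) \<inter> (V \<times> V)))"

end

theory Submission
  imports Defs "HOL-Library.Transitive_Closure_Table"
begin

text \<open>
  Induction on the cyclomatic number m - n + cc of F. When it is zero, F is an oriented forest: a
  digraph that is not (n - 1)-colourable contains a nonempty subdigraph in which every vertex has
  in- and out-degree at least n - 1, and F embeds into it greedily, leaf by leaf.

  Otherwise some arc uv of F lies on a cycle of the underlying graph, so F - uv has the same n and
  cc and one arc less. If D is not 4k-colourable, neither is one of its strong components. Since a
  digraph whose arcs rise at most one level is 2c-colourable as soon as its levels are
  c-colourable, grouping the vertices of that component by their distance from a root r, and then
  by their distance to r, yields a set S that is not k-colourable and whose vertices all have the
  same distances from and to r. Any two vertices of S are joined by a path through r whose interior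
  avoids S. By induction D[S] contains a subdivision of F - uv, and such a path from the image of u
  to the image of v completes it to a subdivision of F.
\<close>

section \<open>Weak components and the cyclomatic number\<close>

definition weak_conn :: "('a \<times> 'a) set \<Rightarrow> ('a \<times> 'a) set" where
  "weak_conn A = (A \<union> A\<inverse>)\<^sup>*"

lemma equiv_weak_conn: "equiv UNIV (weak_conn A)"
  unfolding weak_conn_def equiv_def refl_on_def
  by (simp add: sym_rtrancl sym_Un_converse trans_rtrancl)

lemma weak_conn_sym: "(x, y) \<in> weak_conn A \<Longrightarrow> (y, x) \<in> weak_conn A"
  using equiv_weak_conn by (metis equiv_def symE)

lemma weak_conn_refl [simp]: "(x, x) \<in> weak_conn A"
  by (simp add: weak_conn_def)

lemma weak_conn_trans: "(x, y) \<in> weak_conn A \<Longrightarrow> (y, z) \<in> weak_conn A \<Longrightarrow> (x, z) \<in> weak_conn A"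
  unfolding weak_conn_def by (rule rtrancl_trans)

lemma weak_conn_join: "(x, y) \<in> weak_conn A \<Longrightarrow> (z, y) \<in> weak_conn A \<Longrightarrow> (x, z) \<in> weak_conn A"
  using weak_conn_sym weak_conn_trans by metis

lemma weak_conn_mono: "A \<subseteq> B \<Longrightarrow> weak_conn A \<subseteq> weak_conn B"
  unfolding weak_conn_def by (rule rtrancl_mono) auto

lemma weak_conn_Image_subset:
  assumes "A \<subseteq> V \<times> V" "x \<in> V" shows "weak_conn A `` {x} \<subseteq> V"
proof
  fix y assume "y \<in> weak_conn A `` {x}"
  then have "(x, y) \<in> (A \<union> A\<inverse>)\<^sup>*" by (simp add: weak_conn_def)
  then show "y \<in> V" by induction (use assms in auto)
qed

lemma weak_conn_insert:
  "weak_conn (insert (u, v) A) = weak_conn A \<union> (weak_conn A `` {u, v}) \<times> (weak_conn A `` {u, v})"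
proof -
  let ?S = "A \<union> A\<inverse>"
  have sym: "(x, y) \<in> ?S\<^sup>* \<Longrightarrow> (y, x) \<in> ?S\<^sup>*" for x y
    using weak_conn_sym unfolding weak_conn_def .
  have "insert (u, v) A \<union> (insert (u, v) A)\<inverse> = insert (u, v) (insert (v, u) ?S)"
    by auto
  then have "weak_conn (insert (u, v) A) = (insert (u, v) (insert (v, u) ?S))\<^sup>*"
    by (simp add: weak_conn_def)
  also have "\<dots> = weak_conn A \<union> (weak_conn A `` {u, v}) \<times> (weak_conn A `` {u, v})"
    unfolding rtrancl_insert weak_conn_def using sym by (auto intro: rtrancl_trans)
  finally show ?thesis .
qed

lemma num_cc_eq_card_quotient:
  assumes "A \<subseteq> V \<times> V" shows "num_cc V A = card (V // weak_conn A)"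
proof -
  have "(weak_conn A \<inter> V \<times> V) `` {x} = weak_conn A `` {x}" if "x \<in> V" for x
    using weak_conn_Image_subset[OF assms that] that by auto
  then have "V // (weak_conn A \<inter> V \<times> V) = V // weak_conn A"
    unfolding quotient_def by auto
  then show ?thesis by (simp add: num_cc_def weak_conn_def)
qed

lemma num_cc_insert_connected:
  assumes "(u, v) \<in> weak_conn A" shows "num_cc V (insert (u, v) A) = num_cc V A"
proof -
  have "weak_conn A `` {v} = weak_conn A `` {u}"
    using assms by (intro equiv_class_eq[OF equiv_weak_conn]) (rule weak_conn_sym)
  then have "weak_conn A `` {u, v} = weak_conn A `` {u}" by auto
  then have "weak_conn A `` {u, v} \<times> weak_conn A `` {u, v} \<subseteq> weak_conn A"
    by (auto intro: weak_conn_join weak_conn_sym)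
  then have "weak_conn (insert (u, v) A) = weak_conn A"
    unfolding weak_conn_insert by blast
  then show ?thesis by (simp add: num_cc_def weak_conn_def)
qed

lemma weak_conn_insert_Image:
  "weak_conn (insert (u, v) A) `` {x} =
    (if x \<in> weak_conn A `` {u, v} then weak_conn A `` {u, v} else weak_conn A `` {x})"
proof -
  have "x \<in> weak_conn A `` {u, v} \<Longrightarrow> weak_conn A `` {x} \<subseteq> weak_conn A `` {u, v}"
    by (auto intro: weak_conn_trans)
  then show ?thesis by (auto simp: weak_conn_insert)
qed

lemma quotient_weak_conn_insert:
  fixes A :: "('a \<times> 'a) set"
  assumes "u \<in> V" "v \<in> V"
  defines "U \<equiv> weak_conn A `` {u, v}"
  shows "V // weak_conn (insert (u, v) A) =
    insert U (V // weak_conn A - {weak_conn A `` {u}, weak_conn A `` {v}})"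
    (is "_ = insert U ?Q0")
proof -
  let ?R = "weak_conn A"
  have outside_U: "x \<notin> U" if "?R `` {x} \<in> ?Q0" for x
  proof
    assume "x \<in> U"
    then have "(u, x) \<in> ?R \<or> (v, x) \<in> ?R" by (auto simp: U_def)
    then have "?R `` {u} = ?R `` {x} \<or> ?R `` {v} = ?R `` {x}"
      using equiv_class_eq[OF equiv_weak_conn] by meson
    with that show False by auto
  qed
  show ?thesis
  proof (intro equalityI subsetI)
    fix X
    assume "X \<in> V // weak_conn (insert (u, v) A)"
    then obtain x where "x \<in> V" "X = weak_conn (insert (u, v) A) `` {x}"
      by (auto elim: quotientE)
    moreover have "?R `` {x} \<in> ?Q0" if "x \<notin> U"
      using that \<open>x \<in> V\<close> weak_conn_refl[of x A] unfolding U_def by (auto intro: quotientI)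
    ultimately show "X \<in> insert U ?Q0" by (auto simp: weak_conn_insert_Image U_def)
  next
    fix X
    assume "X \<in> insert U ?Q0"
    then consider "X = U" | "X \<in> ?Q0" by blast
    then show "X \<in> V // weak_conn (insert (u, v) A)"
    proof cases
      case 1
      have "u \<in> U" using weak_conn_refl[of u A] unfolding U_def by blast
      then have "X = weak_conn (insert (u, v) A) `` {u}"
        using 1 by (simp add: weak_conn_insert_Image U_def)
      then show ?thesis using \<open>u \<in> V\<close> by (auto intro: quotientI)
    next
      case 2
      then obtain x where "x \<in> V" "X = ?R `` {x}" by (auto elim: quotientE)
      then have "X = weak_conn (insert (u, v) A) `` {x}"
        using 2 outside_U[of x] by (simp add: weak_conn_insert_Image U_def)
      then show ?thesis using \<open>x \<in> V\<close> by (auto intro: quotientI)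
    qed
  qed
qed

lemma num_cc_insert_unconnected:
  assumes AV: "A \<subseteq> V \<times> V" and "u \<in> V" "v \<in> V" "finite V"
    and uv: "(u, v) \<notin> weak_conn A"
  shows "Suc (num_cc V (insert (u, v) A)) = num_cc V A"
proof -
  let ?R = "weak_conn A"
  define Q0 where "Q0 = V // ?R - {?R `` {u}, ?R `` {v}}"
  have "finite Q0" unfolding Q0_def quotient_def using \<open>finite V\<close> by simp
  have "?R `` {u, v} \<notin> Q0"
  proof
    assume "?R `` {u, v} \<in> Q0"
    then obtain x where "?R `` {u, v} = ?R `` {x}" "?R `` {x} \<noteq> ?R `` {u}"
      unfolding Q0_def quotient_def by blast
    moreover have "u \<in> ?R `` {u, v}" using weak_conn_refl[of u A] by blast
    ultimately show False using equiv_class_eq[OF equiv_weak_conn] by (metis Image_singleton_iff)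
  qed
  then have new: "num_cc V (insert (u, v) A) = Suc (card Q0)"
    using num_cc_eq_card_quotient[of "insert (u, v) A" V] AV \<open>u \<in> V\<close> \<open>v \<in> V\<close> \<open>finite Q0\<close>
    unfolding quotient_weak_conn_insert[OF \<open>u \<in> V\<close> \<open>v \<in> V\<close>] Q0_def by simp
  have "?R `` {u} \<noteq> ?R `` {v}"
    using uv eq_equiv_class[OF _ equiv_weak_conn UNIV_I] by metis
  moreover have "?R `` {u} \<notin> Q0" "?R `` {v} \<notin> Q0" by (simp_all add: Q0_def)
  moreover have "V // ?R = insert (?R `` {u}) (insert (?R `` {v}) Q0)"
    unfolding Q0_def using \<open>u \<in> V\<close> \<open>v \<in> V\<close> by (auto intro: quotientI)
  ultimately have "num_cc V A = Suc (Suc (card Q0))"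
    using num_cc_eq_card_quotient[OF AV] \<open>finite Q0\<close> by simp
  with new show ?thesis by simp
qed

lemma weak_conn_Image_isolated:
  assumes "A \<subseteq> V \<times> V" "w \<notin> V" shows "weak_conn A `` {w} = {w}"
proof -
  have "(w, y) \<in> (A \<union> A\<inverse>)\<^sup>* \<Longrightarrow> y = w" for y
    by (erule converse_rtranclE) (use assms in auto)
  then show ?thesis by (auto simp: weak_conn_def)
qed

lemma num_cc_insert_isolated:
  assumes AV: "A \<subseteq> V \<times> V" and "w \<notin> V" "finite V"
  shows "num_cc (insert w V) A = Suc (num_cc V A)"
proof -
  have "insert w V // weak_conn A = insert {w} (V // weak_conn A)"
    using weak_conn_Image_isolated[OF assms(1,2)] by (simp add: quotient_def)
  moreover have "{w} \<notin> V // weak_conn A"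
    using weak_conn_Image_subset[OF AV] \<open>w \<notin> V\<close> by (auto elim!: quotientE)
  moreover have "finite (V // weak_conn A)"
    using \<open>finite V\<close> by (simp add: quotient_def)
  moreover have "A \<subseteq> insert w V \<times> insert w V" using AV by auto
  ultimately show ?thesis
    using num_cc_eq_card_quotient AV by (metis card_insert_disjoint)
qed

lemma num_cc_empty: "finite V \<Longrightarrow> num_cc V {} = card V"
proof -
  have "V // weak_conn {} = (\<lambda>x. {x}) ` V"
    by (auto simp: quotient_def weak_conn_def)
  moreover have "inj_on (\<lambda>x. {x}) V" by simp
  ultimately show ?thesis
    using num_cc_eq_card_quotient[of "{}" V] by (simp add: card_image)
qed

lemma num_cc_pos:
  assumes "A \<subseteq> V \<times> V" "finite V" "V \<noteq> {}" shows "0 < num_cc V A"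
  using assms by (simp add: num_cc_eq_card_quotient quotient_def card_gt_0_iff)

lemma card_le_card_arcs_plus_num_cc:
  assumes "A \<subseteq> V \<times> V" "finite V" shows "card V \<le> card A + num_cc V A"
proof -
  have "finite A" using assms finite_subset by blast
  then show ?thesis using assms(1)
  proof (induction A rule: finite_induct)
    case empty then show ?case by (simp add: num_cc_empty \<open>finite V\<close>)
  next
    case (insert a A)
    obtain u v where "a = (u, v)" by fastforce
    with insert show ?case
      using num_cc_insert_connected[of u v A V] num_cc_insert_unconnected[of A V u v] \<open>finite V\<close>
      by (cases "(u, v) \<in> weak_conn A") auto
  qed
qed

lemma card_arcs_plus_num_cc_le_if_bridges:
  assumes "A \<subseteq> V \<times> V" "finite V"
    and bridges: "\<forall>(u, v)\<in>A. (u, v) \<notin> weak_conn (A - {(u, v)})"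
  shows "card A + num_cc V A \<le> card V"
proof -
  have "finite A" using assms finite_subset by blast
  then show ?thesis using assms(1) bridges
  proof (induction A rule: finite_induct)
    case empty then show ?case by (simp add: num_cc_empty \<open>finite V\<close>)
  next
    case (insert a A)
    obtain u v where a: "a = (u, v)" by fastforce
    have "\<forall>(x, y)\<in>A. (x, y) \<notin> weak_conn (A - {(x, y)})"
      using insert.prems(2) weak_conn_mono[of "A - {_}" "insert a A - {_}"] by blast
    moreover have "insert a A - {a} = A" using insert.hyps(2) by simp
    then have "(u, v) \<notin> weak_conn A" using insert.prems(2) a by fastforce
    ultimately show ?case
      using insert num_cc_insert_unconnected[of A V u v] \<open>finite V\<close> a by auto
  qed
qed

definition cyclomatic_number :: "'a set \<Rightarrow> ('a \<times> 'a) set \<Rightarrow> nat" where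
  "cyclomatic_number V A = card A + num_cc V A - card V"

lemma cyclomatic_number_remove_cycle_arc:
  assumes "A \<subseteq> V \<times> V" "finite V" "(u, v) \<in> A" "(u, v) \<in> weak_conn (A - {(u, v)})"
  shows "cyclomatic_number V A = Suc (cyclomatic_number V (A - {(u, v)}))"
proof -
  let ?A0 = "A - {(u, v)}"
  have "finite A" using assms(1,2) finite_subset by blast
  have "num_cc V A = num_cc V ?A0"
    using num_cc_insert_connected[OF assms(4)] assms(3) by (simp add: insert_absorb)
  moreover have "card A = Suc (card ?A0)" using card_Suc_Diff1[OF \<open>finite A\<close> assms(3)] by simp
  moreover have "card V \<le> card ?A0 + num_cc V ?A0"
    using assms(1,2) by (intro card_le_card_arcs_plus_num_cc) auto
  ultimately show ?thesis by (simp add: cyclomatic_number_def)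
qed

section \<open>Embedding oriented forests\<close>

lemma ex_not_in_if_card_less: "finite B \<Longrightarrow> card B < card C \<Longrightarrow> \<exists>x\<in>C. x \<notin> B"
  by (meson card_mono not_le subsetI)

lemma card_le_1_nonempty_singleton:
  assumes "finite I" "card I \<le> 1" "I \<noteq> {}" shows "\<exists>a. I = {a}"
  using assms by (metis One_nat_def card_1_singletonE card_eq_0_iff le_Suc_eq le_zero_eq)

text \<open>m + cc \<le> n says that the underlying graph is a forest (m + cc \<ge> n holds for every
  digraph, see card_le_card_arcs_plus_num_cc); in particular a digon counts as a cycle.\<close>
definition oriented_forest :: "'a set \<Rightarrow> ('a \<times> 'a) set \<Rightarrow> bool" where
  "oriented_forest V A \<longleftrightarrow> is_digraph V A \<and> card A + num_cc V A \<le> card V"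

definition incident_arcs :: "('a \<times> 'a) set \<Rightarrow> 'a \<Rightarrow> ('a \<times> 'a) set" where
  "incident_arcs A w = {a \<in> A. fst a = w \<or> snd a = w}"

lemma sum_card_fibres:
  assumes "finite V" "f ` A \<subseteq> V" "finite A"
  shows "(\<Sum>w\<in>V. card {a \<in> A. f a = w}) = card A"
proof -
  have "A = (\<Union>w\<in>V. {a \<in> A. f a = w})" using assms(2) by auto
  moreover have "card (\<Union>w\<in>V. {a \<in> A. f a = w}) = (\<Sum>w\<in>V. card {a \<in> A. f a = w})"
    by (rule card_UN_disjoint) (use assms in auto)
  ultimately show ?thesis by simp
qed

lemma sum_card_incident_arcs:
  assumes "is_digraph V A" shows "(\<Sum>w\<in>V. card (incident_arcs A w)) = 2 * card A"
proof -
  have fin: "finite V" "finite A" and AV: "A \<subseteq> V \<times> V" and loopless: "\<forall>x. (x, x) \<notin> A"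
    using assms finite_subset[of A "V \<times> V"] by (auto simp: is_digraph_def)
  have "card (incident_arcs A w) = card {a \<in> A. fst a = w} + card {a \<in> A. snd a = w}" for w
  proof -
    have "incident_arcs A w = {a \<in> A. fst a = w} \<union> {a \<in> A. snd a = w}"
      by (auto simp: incident_arcs_def)
    moreover have "{a \<in> A. fst a = w} \<inter> {a \<in> A. snd a = w} = {}" using loopless by auto
    ultimately show ?thesis using fin by (simp add: card_Un_disjoint)
  qed
  moreover have "fst ` A \<subseteq> V" "snd ` A \<subseteq> V" using AV by auto
  ultimately show ?thesis
    using sum_card_fibres[of V fst A] sum_card_fibres[of V snd A] fin
    by (simp add: sum.distrib)
qed

lemma exists_vertex_incident_le_1:
  assumes "is_digraph V A" "card A < card V"
  shows "\<exists>w\<in>V. card (incident_arcs A w) \<le> 1"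
proof (rule ccontr)
  assume "\<not> ?thesis"
  then have "(\<Sum>w\<in>V. 2) \<le> (\<Sum>w\<in>V. card (incident_arcs A w))"
    by (intro sum_mono) (auto simp: not_le numeral_2_eq_2 Suc_le_eq)
  then show False using sum_card_incident_arcs[OF assms(1)] assms(2) by simp
qed

lemma oriented_forest_remove_leaf:
  assumes forest: "oriented_forest V A" and "V \<noteq> {}"
  obtains w where "w \<in> V" "card (incident_arcs A w) \<le> 1"
    "oriented_forest (V - {w}) (A - incident_arcs A w)"
proof -
  have dg: "is_digraph V A" and count: "card A + num_cc V A \<le> card V"
    using forest by (auto simp: oriented_forest_def)
  have fin: "finite V" "finite A" and AV: "A \<subseteq> V \<times> V" and loopless: "\<forall>x. (x, x) \<notin> A"
    using dg finite_subset[of A "V \<times> V"] by (auto simp: is_digraph_def)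
  have "card A < card V" using count num_cc_pos[OF AV fin(1) \<open>V \<noteq> {}\<close>] by linarith
  then obtain w where w: "w \<in> V" "card (incident_arcs A w) \<le> 1"
    using exists_vertex_incident_le_1[OF dg] by blast
  define V' where "V' = V - {w}"
  define A' where "A' = A - incident_arcs A w"
  have A'V': "A' \<subseteq> V' \<times> V'" using AV by (auto simp: A'_def V'_def incident_arcs_def)
  have V: "V = insert w V'" "w \<notin> V'" "finite V'" using w fin by (auto simp: V'_def)
  have isolated: "num_cc V A' = Suc (num_cc V' A')"
    using num_cc_insert_isolated[OF A'V' V(2,3)] V(1) by simp
  have "card A' + num_cc V' A' \<le> card V'"
  proof (cases "incident_arcs A w = {}")
    case True
    then show ?thesis using count isolated V by (simp add: A'_def)
  next
    case False
    moreover have "finite (incident_arcs A w)" using fin(2) by (simp add: incident_arcs_def)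
    ultimately obtain x y where xy: "incident_arcs A w = {(x, y)}"
      using card_le_1_nonempty_singleton w(2) by (metis surj_pair)
    then have "(x, y) \<in> incident_arcs A w" by simp
    then have "(x, y) \<in> A" and "w = x \<or> w = y" by (auto simp: incident_arcs_def)
    moreover have "A' = A - {(x, y)}" using xy by (simp add: A'_def)
    ultimately have A: "A = insert (x, y) A'" "(x, y) \<notin> A'" and "w = x \<or> w = y" by auto
    have "x \<in> V" "y \<in> V" "x \<noteq> y" using A AV loopless by auto
    have "(x, y) \<notin> weak_conn A'"
    proof
      assume "(x, y) \<in> weak_conn A'"
      moreover from this have "(y, x) \<in> weak_conn A'" by (rule weak_conn_sym)
      ultimately show False
        using weak_conn_Image_isolated[OF A'V' V(2)] \<open>x \<noteq> y\<close> \<open>w = x \<or> w = y\<close>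
        by (metis Image_singleton_iff singletonD)
    qed
    then have "Suc (num_cc V A) = num_cc V A'"
      using num_cc_insert_unconnected[of A' V x y] A'V' V \<open>x \<in> V\<close> \<open>y \<in> V\<close> A(1) by auto
    moreover have "card A = Suc (card A')" using A fin(2) by simp
    ultimately show ?thesis using count isolated V by simp
  qed
  moreover have "is_digraph V' A'" using A'V' V loopless by (auto simp: is_digraph_def A'_def)
  ultimately show thesis
    using that w unfolding oriented_forest_def V'_def A'_def by blast
qed

definition semidegree_at_least :: "('b \<times> 'b) set \<Rightarrow> 'b set \<Rightarrow> nat \<Rightarrow> bool" where
  "semidegree_at_least AD W k \<longleftrightarrow>
     (\<forall>x\<in>W. k \<le> card {y \<in> W. (x, y) \<in> AD} \<and> k \<le> card {y \<in> W. (y, x) \<in> AD})"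

lemma card_gt_if_semidegree_at_least:
  assumes "\<forall>x. (x, x) \<notin> AD" "finite W" "W \<noteq> {}" "semidegree_at_least AD W k"
  shows "k < card W"
proof -
  obtain x where "x \<in> W" using \<open>W \<noteq> {}\<close> by blast
  have "{y \<in> W. (x, y) \<in> AD} \<subseteq> W - {x}" using assms(1) by auto
  then have "k \<le> card (W - {x})"
    using assms(2,4) \<open>x \<in> W\<close> unfolding semidegree_at_least_def
    by (meson card_mono finite_Diff order_trans)
  then show ?thesis using card_Diff1_less[OF \<open>finite W\<close> \<open>x \<in> W\<close>] by linarith
qed

lemma exists_fresh_image:
  fixes AD :: "('b \<times> 'b) set"
  assumes loopless: "\<forall>x. (x, x) \<notin> AD" and W: "finite W" "W \<noteq> {}"
    and deg: "semidegree_at_least AD W k"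
    and \<phi>: "inj_on \<phi> V'" "\<phi> ` V' \<subseteq> W" and "card V' \<le> k" "finite V'"
    and I: "card I \<le> 1" "finite I" "\<forall>(p, q)\<in>I. (p = w \<and> q \<in> V') \<or> (q = w \<and> p \<in> V')" "w \<notin> V'"
  shows "\<exists>y\<in>W - \<phi> ` V'. \<forall>(p, q)\<in>I. ((\<phi>(w := y)) p, (\<phi>(w := y)) q) \<in> AD"
proof -
  have card_img: "card (\<phi> ` V') = card V'" using \<phi>(1) by (rule card_image)
  show ?thesis
  proof (cases "I = {}")
    case True
    have "card (\<phi> ` V') < card W"
      using card_img \<open>card V' \<le> k\<close> card_gt_if_semidegree_at_least[OF loopless W deg] by linarith
    then show ?thesis using ex_not_in_if_card_less[of "\<phi> ` V'" W] \<open>finite V'\<close> True by auto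
  next
    case False
    then obtain p q where "I = {(p, q)}"
      using card_le_1_nonempty_singleton I(1,2) by (metis surj_pair)
    define N where "N = {y \<in> W. ((\<phi>(w := y)) p, (\<phi>(w := y)) q) \<in> AD}"
    obtain z where "z \<in> V'" "k \<le> card N" "\<phi> z \<notin> N"
    proof -
      from I(3) \<open>I = {(p, q)}\<close> have "(p = w \<and> q \<in> V') \<or> (q = w \<and> p \<in> V')" by simp
      then show thesis
      proof
        assume pq: "p = w \<and> q \<in> V'"
        then have "N = {y \<in> W. (y, \<phi> q) \<in> AD}" using I(4) by (auto simp: N_def)
        then show thesis
          using that[of q] pq \<phi>(2) deg loopless unfolding semidegree_at_least_def by auto
      next
        assume pq: "q = w \<and> p \<in> V'"
        then have "N = {y \<in> W. (\<phi> p, y) \<in> AD}" using I(4) by (auto simp: N_def)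
        then show thesis
          using that[of p] pq \<phi>(2) deg loopless unfolding semidegree_at_least_def by auto
      qed
    qed
    have "0 < card V'" using \<open>z \<in> V'\<close> \<open>finite V'\<close> card_gt_0_iff by blast
    then have "card (\<phi> ` V' - {\<phi> z}) < card N"
      using card_img \<open>z \<in> V'\<close> \<open>finite V'\<close> \<open>card V' \<le> k\<close> \<open>k \<le> card N\<close> by simp
    then obtain y where "y \<in> N" "y \<notin> \<phi> ` V'"
      using ex_not_in_if_card_less[of "\<phi> ` V' - {\<phi> z}" N] \<open>finite V'\<close> \<open>\<phi> z \<notin> N\<close> by auto
    then show ?thesis using \<open>I = {(p, q)}\<close> by (auto simp: N_def)
  qed
qed

lemma oriented_forest_embeds:
  fixes AD :: "('b \<times> 'b) set"
  assumes loopless: "\<forall>x. (x, x) \<notin> AD" and W: "finite W" "W \<noteq> {}"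
    and deg: "semidegree_at_least AD W k"
  shows "oriented_forest V A \<Longrightarrow> card V \<le> Suc k \<Longrightarrow>
    \<exists>\<phi>. inj_on \<phi> V \<and> \<phi> ` V \<subseteq> W \<and> (\<forall>(x, y)\<in>A. (\<phi> x, \<phi> y) \<in> AD)"
proof (induction "card V" arbitrary: V A)
  case 0
  then have "V = {}" "A = {}" by (auto simp: oriented_forest_def is_digraph_def)
  then show ?case by simp
next
  case (Suc n)
  have fin: "finite V" "finite A" and AV: "A \<subseteq> V \<times> V"
    using Suc.prems(1) finite_subset[of A "V \<times> V"] by (auto simp: oriented_forest_def is_digraph_def)
  obtain w where w: "w \<in> V" "card (incident_arcs A w) \<le> 1"
    and forest': "oriented_forest (V - {w}) (A - incident_arcs A w)"
    using oriented_forest_remove_leaf[OF Suc.prems(1)] Suc.hyps(2) by force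
  define V' where "V' = V - {w}"
  define I where "I = incident_arcs A w"
  have card_V': "card V' = n" using Suc.hyps(2) w(1) fin(1) by (simp add: V'_def)
  have "card V' \<le> k" "finite V'" using card_V' Suc.hyps(2) Suc.prems(2) fin(1)
    by (simp_all add: V'_def)
  then have "card V' \<le> Suc k" by simp
  then obtain \<phi> where \<phi>: "inj_on \<phi> V'" "\<phi> ` V' \<subseteq> W" "\<forall>(x, y)\<in>A - I. (\<phi> x, \<phi> y) \<in> AD"
    using Suc.hyps(1)[OF card_V'[symmetric]] forest' unfolding V'_def I_def by blast
  have I: "finite I" "\<forall>(p, q)\<in>I. (p = w \<and> q \<in> V') \<or> (q = w \<and> p \<in> V')"
    using fin(2) AV Suc.prems(1) unfolding I_def V'_def incident_arcs_def oriented_forest_def is_digraph_def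
    by auto
  obtain y where y: "y \<in> W" "y \<notin> \<phi> ` V'" "\<forall>(p, q)\<in>I. ((\<phi>(w := y)) p, (\<phi>(w := y)) q) \<in> AD"
    using exists_fresh_image[OF loopless W deg \<phi>(1,2) \<open>card V' \<le> k\<close> \<open>finite V'\<close>
      w(2)[folded I_def] I] by (auto simp: V'_def)
  have V: "V = insert w V'" "w \<notin> V'" using w(1) by (auto simp: V'_def)
  have "inj_on (\<phi>(w := y)) V"
    using V y(2) inj_on_fun_updI[OF \<phi>(1) y(2)] by (auto simp: image_iff)
  moreover have "(\<phi>(w := y)) ` V \<subseteq> W" using V y(1) \<phi>(2) by auto
  moreover have "((\<phi>(w := y)) p, (\<phi>(w := y)) q) \<in> AD" if "(p, q) \<in> A" for p q
  proof (cases "(p, q) \<in> I")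
    case True
    with y(3) show ?thesis by blast
  next
    case False
    then have "p \<noteq> w" "q \<noteq> w" "(p, q) \<in> A - I" using that by (auto simp: I_def incident_arcs_def)
    then show ?thesis using \<phi>(3) by auto
  qed
  ultimately show ?case by blast
qed

section \<open>Acyclic colourings\<close>

definition colourable :: "'a set \<Rightarrow> ('a \<times> 'a) set \<Rightarrow> nat \<Rightarrow> bool" where
  "colourable V A k \<longleftrightarrow> (\<exists>f. acyclic_colouring V A k f)"

lemma colourable_mono:
  assumes "colourable V A k" "k \<le> k'" shows "colourable V A k'"
proof -
  obtain f where f: "acyclic_colouring V A k f" using assms(1) by (auto simp: colourable_def)
  have "acyclic (A \<inter> {v \<in> V. f v = i} \<times> {v \<in> V. f v = i})" for i
  proof (cases "i < k")
    case True
    then show ?thesis using f by (simp add: acyclic_colouring_def)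
  next
    case False
    then have "A \<inter> {v \<in> V. f v = i} \<times> {v \<in> V. f v = i} = {}"
      using f by (auto simp: acyclic_colouring_def)
    then show ?thesis by (simp add: acyclic_def)
  qed
  then have "acyclic_colouring V A k' f"
    using f assms(2) by (auto simp: acyclic_colouring_def)
  then show ?thesis by (auto simp: colourable_def)
qed

lemma colourable_arcs_mono:
  assumes "colourable V A k" "B \<subseteq> A" shows "colourable V B k"
proof -
  obtain f where f: "acyclic_colouring V A k f" using assms(1) by (auto simp: colourable_def)
  have "acyclic (B \<inter> K \<times> K)" if "acyclic (A \<inter> K \<times> K)" for K
    by (rule acyclic_subset[OF that]) (use assms(2) in auto)
  then have "acyclic_colouring V B k f"
    using f unfolding acyclic_colouring_def by blast
  then show ?thesis by (auto simp: colourable_def)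
qed

lemma colourable_Int_Times: "colourable V (A \<inter> V \<times> V) k \<longleftrightarrow> colourable V A k"
proof -
  have "A \<inter> V \<times> V \<inter> {v \<in> V. f v = i} \<times> {v \<in> V. f v = i} = A \<inter> {v \<in> V. f v = i} \<times> {v \<in> V. f v = i}"
    for f :: "'a \<Rightarrow> nat" and i
    by auto
  then show ?thesis by (simp add: colourable_def acyclic_colouring_def)
qed

lemma colourable_converse: "colourable V (A\<inverse>) k \<longleftrightarrow> colourable V A k"
proof -
  have "A\<inverse> \<inter> K \<times> K = (A \<inter> K \<times> K)\<inverse>" for K by auto
  then show ?thesis by (simp add: colourable_def acyclic_colouring_def)
qed

lemma colourable_empty [simp]: "colourable {} A k"
  by (simp add: colourable_def acyclic_colouring_def acyclic_def)

lemma not_colourable_if_dichromatic_ge: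
  assumes "c \<le> dichromatic V A" "0 < c" shows "\<not> colourable V A (c - 1)"
proof
  assume "colourable V A (c - 1)"
  then have "dichromatic V A \<le> c - 1"
    unfolding dichromatic_def colourable_def by (rule Least_le)
  then show False using assms by simp
qed

lemma acyclic_add_sink:
  assumes "acyclic R" "x \<notin> Domain R'" "R' \<subseteq> R \<union> UNIV \<times> {x}"
  shows "acyclic R'"
proof -
  have "(a, b) \<in> R\<^sup>+ \<or> b = x" if "(a, b) \<in> R'\<^sup>+" for a b
    using that
  proof induction
    case (base b)
    then show ?case using assms(3) by auto
  next
    case (step y z)
    then have "y \<noteq> x" using assms(2) by auto
    with step show ?case using assms(3) by (auto intro: trancl_into_trancl)
  qed
  moreover have "(x, x) \<notin> R'\<^sup>+" using assms(2) by (auto dest: tranclD)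
  ultimately show ?thesis using assms(1) unfolding acyclic_def by blast
qed

lemma colourable_insert_low_outdegree:
  assumes "colourable (W - {x}) A k" "x \<in> W" "(x, x) \<notin> A" "finite W"
    and low: "card {y \<in> W. (x, y) \<in> A} < k"
  shows "colourable W A k"
proof -
  obtain f where f: "acyclic_colouring (W - {x}) A k f"
    using assms(1) by (auto simp: colourable_def)
  let ?N = "{y \<in> W. (x, y) \<in> A}"
  have "card (f ` ?N) < card {..<k}" using low card_image_le[of ?N f] \<open>finite W\<close> by simp
  then obtain c where "c < k" "c \<notin> f ` ?N"
    using ex_not_in_if_card_less[of "f ` ?N" "{..<k}"] \<open>finite W\<close> by auto
  define g where "g = f(x := c)"
  have "acyclic (A \<inter> {v \<in> W. g v = i} \<times> {v \<in> W. g v = i})" if "i < k" for i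
  proof (cases "i = c")
    case False
    then have "{v \<in> W. g v = i} = {v \<in> W - {x}. f v = i}" by (auto simp: g_def)
    then show ?thesis using f that by (simp add: acyclic_colouring_def)
  next
    case True
    let ?K = "{v \<in> W - {x}. f v = i}"
    have "acyclic (A \<inter> ?K \<times> ?K)" using f that by (simp add: acyclic_colouring_def)
    moreover have "x \<notin> Domain (A \<inter> insert x ?K \<times> insert x ?K)"
      using True \<open>c \<notin> f ` ?N\<close> assms(3) by auto
    moreover have "A \<inter> insert x ?K \<times> insert x ?K \<subseteq> A \<inter> ?K \<times> ?K \<union> UNIV \<times> {x}"
      using True \<open>c \<notin> f ` ?N\<close> by auto
    ultimately have "acyclic (A \<inter> insert x ?K \<times> insert x ?K)" by (rule acyclic_add_sink)
    moreover have "{v \<in> W. g v = i} = insert x ?K" using True \<open>x \<in> W\<close> by (auto simp: g_def)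
    ultimately show ?thesis by simp
  qed
  moreover have "\<forall>v\<in>W. g v < k" using f \<open>c < k\<close> by (auto simp: g_def acyclic_colouring_def)
  ultimately show ?thesis unfolding colourable_def acyclic_colouring_def by blast
qed

lemma colourable_insert_low_indegree:
  assumes "colourable (W - {x}) A k" "x \<in> W" "(x, x) \<notin> A" "finite W"
    and low: "card {y \<in> W. (y, x) \<in> A} < k"
  shows "colourable W A k"
  using colourable_insert_low_outdegree[of W x "A\<inverse>" k] assms by (simp add: colourable_converse)

lemma exists_semidegree_at_least_if_not_colourable:
  assumes "finite V" "\<forall>x. (x, x) \<notin> A" "\<not> colourable V A k"
  shows "\<exists>W\<subseteq>V. W \<noteq> {} \<and> semidegree_at_least A W k"
  using assms(1,3)
proof (induction "card V" arbitrary: V rule: less_induct)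
  case less
  show ?case
  proof (cases "semidegree_at_least A V k")
    case True
    then show ?thesis using less.prems(2) colourable_empty by blast
  next
    case False
    then obtain x where "x \<in> V"
      and low: "card {y \<in> V. (x, y) \<in> A} < k \<or> card {y \<in> V. (y, x) \<in> A} < k"
      by (auto simp: semidegree_at_least_def not_le)
    have "\<not> colourable (V - {x}) A k"
    proof
      assume col: "colourable (V - {x}) A k"
      have "(x, x) \<notin> A" using assms(2) by blast
      with low have "colourable V A k"
        using colourable_insert_low_outdegree[OF col \<open>x \<in> V\<close> _ less.prems(1)]
          colourable_insert_low_indegree[OF col \<open>x \<in> V\<close> _ less.prems(1)] by blast
      with less.prems(2) show False by contradiction
    qed
    moreover have "card (V - {x}) < card V" using less.prems(1) \<open>x \<in> V\<close> by (rule card_Diff1_less)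
    ultimately show ?thesis using less.hyps[of "V - {x}"] less.prems(1) by blast
  qed
qed

lemma contains_subdivision_if_embedding:
  assumes "is_digraph V A" "inj_on \<phi> V" "\<phi> ` V \<subseteq> VD" "\<forall>(x, y)\<in>A. (\<phi> x, \<phi> y) \<in> AD"
  shows "contains_subdivision VD AD V A"
proof -
  define P where "P e = [\<phi> (fst e), \<phi> (snd e)]" for e :: "'a \<times> 'a"
  have "is_dipath AD (P e) (\<phi> (fst e)) (\<phi> (snd e))" if "e \<in> A" for e
  proof -
    have "fst e \<noteq> snd e" "fst e \<in> V" "snd e \<in> V"
      using that assms(1) by (auto simp: is_digraph_def)
    then have "\<phi> (fst e) \<noteq> \<phi> (snd e)" using assms(2) by (meson inj_on_contraD)
    then show ?thesis
      using assms(4) that by (auto simp: is_dipath_def P_def less_Suc_eq nth_Cons')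
  qed
  moreover have "internal_vertices (P e) = {}" for e by (simp add: P_def internal_vertices_def)
  ultimately show ?thesis using assms(2,3) unfolding contains_subdivision_def by blast
qed

lemma contains_subdivision_oriented_forest:
  assumes "oriented_forest V A" "finite VD" "\<forall>x. (x, x) \<notin> AD"
    and "\<not> colourable VD AD (card V - 1)"
  shows "contains_subdivision VD AD V A"
proof -
  obtain W where "W \<subseteq> VD" "W \<noteq> {}" "semidegree_at_least AD W (card V - 1)"
    using exists_semidegree_at_least_if_not_colourable[OF assms(2-4)] by blast
  moreover have "finite W" using \<open>W \<subseteq> VD\<close> assms(2) finite_subset by blast
  moreover have "card V \<le> Suc (card V - 1)" by simp
  ultimately obtain \<phi> where "inj_on \<phi> V" "\<phi> ` V \<subseteq> W" "\<forall>(x, y)\<in>A. (\<phi> x, \<phi> y) \<in> AD"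
    using oriented_forest_embeds[OF assms(3)] assms(1) by blast
  moreover have "is_digraph V A" using assms(1) by (simp add: oriented_forest_def)
  ultimately show ?thesis
    using \<open>W \<subseteq> VD\<close> by (intro contains_subdivision_if_embedding) auto
qed

section \<open>Levels and strong components\<close>

lemma trancl_cycle_within_strong_component:
  assumes "(x, x) \<in> B\<^sup>+"
  defines "Z \<equiv> {z. (x, z) \<in> B\<^sup>* \<and> (z, x) \<in> B\<^sup>*}"
  shows "(x, x) \<in> (B \<inter> Z \<times> Z)\<^sup>+"
proof -
  have "(x, y) \<in> (B \<inter> Z \<times> Z)\<^sup>+" if "(x, y) \<in> B\<^sup>+" "(y, x) \<in> B\<^sup>*" for y
    using that
  proof (induction rule: trancl_induct)
    case (base y)
    then show ?case by (auto simp: Z_def)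
  next
    case (step y z)
    then have "(y, x) \<in> B\<^sup>*" by (meson converse_rtrancl_into_rtrancl)
    with step have "(x, y) \<in> (B \<inter> Z \<times> Z)\<^sup>+" "(y, z) \<in> B \<inter> Z \<times> Z"
      by (auto simp: Z_def)
    then show ?case by (rule trancl_into_trancl)
  qed
  then show ?thesis using assms(1) by blast
qed

lemma colourable_if_parts_colourable:
  assumes parts: "\<forall>x\<in>X. \<forall>y\<in>X. (x, y) \<in> (A \<inter> X \<times> X)\<^sup>* \<longrightarrow> (y, x) \<in> (A \<inter> X \<times> X)\<^sup>* \<longrightarrow> p x = p y"
    and colourable: "\<forall>i. colourable {x \<in> X. p x = i} A k"
  shows "colourable X A k"
proof -
  obtain g where g: "\<forall>i. acyclic_colouring {x \<in> X. p x = i} A k (g i)"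
    using colourable unfolding colourable_def by metis
  define f where "f x = g (p x) x" for x
  have "acyclic (A \<inter> {v \<in> X. f v = t} \<times> {v \<in> X. f v = t})" if "t < k" for t
  proof (rule acyclicI, intro allI notI)
    fix a
    define B where "B = A \<inter> {v \<in> X. f v = t} \<times> {v \<in> X. f v = t}"
    define Z where "Z = {z. (a, z) \<in> B\<^sup>* \<and> (z, a) \<in> B\<^sup>*}"
    define K where "K = {v \<in> {x \<in> X. p x = p a}. g (p a) v = t}"
    assume "(a, a) \<in> B\<^sup>+"
    then have cycle: "(a, a) \<in> (B \<inter> Z \<times> Z)\<^sup>+"
      unfolding Z_def by (rule trancl_cycle_within_strong_component)
    from \<open>(a, a) \<in> B\<^sup>+\<close> have "a \<in> X" by (auto simp: B_def dest: tranclD)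
    have B_reach: "B\<^sup>* \<subseteq> (A \<inter> X \<times> X)\<^sup>*" unfolding B_def by (rule rtrancl_mono) auto
    have "y \<in> K" if "y \<in> Z" "y \<in> X" "f y = t" for y
    proof -
      have "p y = p a"
        using that(1,2) B_reach parts \<open>a \<in> X\<close> unfolding Z_def by blast
      then show ?thesis using that by (simp add: K_def f_def)
    qed
    then have "B \<inter> Z \<times> Z \<subseteq> A \<inter> K \<times> K" by (auto simp: B_def)
    moreover have "acyclic (A \<inter> K \<times> K)" using g that by (simp add: acyclic_colouring_def K_def)
    ultimately show False using cycle by (meson acyclic_def trancl_mono)
  qed
  moreover have "\<forall>v\<in>X. f v < k" using g by (auto simp: f_def acyclic_colouring_def)
  ultimately show ?thesis unfolding colourable_def acyclic_colouring_def by blast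
qed

text \<open>Levels of equal parity share a palette of c colours, the two parities use disjoint palettes.
  Within a colour class no arc rises a level, so a monochromatic cycle stays inside one level.\<close>
lemma colourable_double_if_levels_colourable:
  fixes l :: "'a \<Rightarrow> int"
  assumes rise: "\<forall>x\<in>X. \<forall>y\<in>X. (x, y) \<in> A \<longrightarrow> l y \<le> l x + 1"
    and levels: "\<forall>i. colourable {x \<in> X. l x = i} A c"
  shows "colourable X A (2 * c)"
proof -
  define A' where "A' = {(x, y) \<in> A. even (l x) = even (l y)}"
  have descend: "l y \<le> l x" if "(x, y) \<in> (A' \<inter> X \<times> X)\<^sup>*" for x y
    using that
  proof induction
    case (step y z)
    then have "l z \<le> l y + 1" "l z \<noteq> l y + 1" using rise by (auto simp: A'_def)
    with step.IH show ?case by linarith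
  qed simp
  have "colourable X A' c"
  proof (rule colourable_if_parts_colourable[where p = l])
    show "\<forall>x\<in>X. \<forall>y\<in>X. (x, y) \<in> (A' \<inter> X \<times> X)\<^sup>* \<longrightarrow> (y, x) \<in> (A' \<inter> X \<times> X)\<^sup>* \<longrightarrow> l x = l y"
      by (auto intro: order_antisym descend)
    show "\<forall>i. colourable {x \<in> X. l x = i} A' c"
      using levels colourable_arcs_mono[of _ A c A'] by (auto simp: A'_def)
  qed
  then obtain f where f: "acyclic_colouring X A' c f" by (auto simp: colourable_def)
  define g where "g x = 2 * f x + (if even (l x) then 0 else 1)" for x
  have "acyclic (A \<inter> {v \<in> X. g v = t} \<times> {v \<in> X. g v = t})" if "t < 2 * c" for t
  proof (rule acyclic_subset)
    show "acyclic (A' \<inter> {v \<in> X. f v = t div 2} \<times> {v \<in> X. f v = t div 2})"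
      using f that by (simp add: acyclic_colouring_def)
    show "A \<inter> {v \<in> X. g v = t} \<times> {v \<in> X. g v = t}
        \<subseteq> A' \<inter> {v \<in> X. f v = t div 2} \<times> {v \<in> X. f v = t div 2}"
      by (auto simp: A'_def g_def split: if_splits; presburger)
  qed
  moreover have "\<forall>v\<in>X. g v < 2 * c" using f by (auto simp: g_def acyclic_colouring_def)
  ultimately show ?thesis unfolding colourable_def acyclic_colouring_def by blast
qed

lemma exists_not_colourable_strong_component:
  assumes "\<not> colourable V A k"
  obtains r C where "C \<subseteq> V" "\<not> colourable C A k" "\<forall>x\<in>C. (r, x) \<in> A\<^sup>* \<and> (x, r) \<in> A\<^sup>*"
proof -
  define p where "p x = {z \<in> V. (x, z) \<in> A\<^sup>* \<and> (z, x) \<in> A\<^sup>*}" for x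
  have "\<forall>x\<in>V. \<forall>y\<in>V. (x, y) \<in> (A \<inter> V \<times> V)\<^sup>* \<longrightarrow> (y, x) \<in> (A \<inter> V \<times> V)\<^sup>* \<longrightarrow> p x = p y"
    using rtrancl_mono[of "A \<inter> V \<times> V" A] unfolding p_def by (auto intro: rtrancl_trans)
  then obtain C where C: "\<not> colourable {x \<in> V. p x = C} A k"
    using colourable_if_parts_colourable assms by blast
  have "{x \<in> V. p x = C} \<noteq> {}"
  proof
    assume "{x \<in> V. p x = C} = {}"
    with C show False by simp
  qed
  then obtain r where r: "r \<in> V" "p r = C" by blast
  have "{x \<in> V. p x = C} = p r"
  proof (intro equalityI subsetI)
    fix x assume "x \<in> {x \<in> V. p x = C}"
    then have "x \<in> V" "p x = p r" using r(2) by simp_all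
    moreover from \<open>x \<in> V\<close> have "x \<in> p x" by (simp add: p_def)
    ultimately show "x \<in> p r" by simp
  next
    fix x assume x: "x \<in> p r"
    then have "p x = p r" by (auto simp: p_def intro: rtrancl_trans)
    then show "x \<in> {x \<in> V. p x = C}" using x r(2) by (simp add: p_def)
  qed
  moreover have "p r \<subseteq> V" "\<forall>x\<in>p r. (r, x) \<in> A\<^sup>* \<and> (x, r) \<in> A\<^sup>*" by (auto simp: p_def)
  ultimately show thesis using that C by metis
qed

section \<open>Shortest walks\<close>

text \<open>Only meaningful if y is reachable from x; otherwise LEAST ranges over an empty set.\<close>
definition walk_dist :: "('a \<times> 'a) set \<Rightarrow> 'a \<Rightarrow> 'a \<Rightarrow> nat" where
  "walk_dist R x y = (LEAST n. (x, y) \<in> R ^^ n)"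

lemma relpow_walk_dist: "(x, y) \<in> R\<^sup>* \<Longrightarrow> (x, y) \<in> R ^^ walk_dist R x y"
  unfolding walk_dist_def by (metis LeastI_ex rtrancl_imp_relpow)

lemma walk_dist_le: "(x, y) \<in> R ^^ n \<Longrightarrow> walk_dist R x y \<le> n"
  unfolding walk_dist_def by (rule Least_le)

lemma walk_dist_from_le_Suc:
  assumes "(r, x) \<in> R\<^sup>*" "(x, y) \<in> R" shows "walk_dist R r y \<le> Suc (walk_dist R r x)"
  using relpow_Suc_I[OF relpow_walk_dist[OF assms(1)] assms(2)] by (rule walk_dist_le)

lemma walk_dist_to_le_Suc:
  assumes "(y, r) \<in> R\<^sup>*" "(x, y) \<in> R" shows "walk_dist R x r \<le> Suc (walk_dist R y r)"
  using relpow_Suc_I2[OF assms(2) relpow_walk_dist[OF assms(1)]] by (rule walk_dist_le)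

lemma relpow_converse:
  fixes R :: "('a \<times> 'a) set" shows "(R\<inverse>) ^^ n = (R ^^ n)\<inverse>"
proof (induction n)
  case (Suc n)
  have "(R\<inverse>) ^^ Suc n = (R O R ^^ n)\<inverse>" by (simp add: Suc.IH converse_relcomp)
  also have "\<dots> = (R ^^ Suc n)\<inverse>" by (simp add: relpow_commute)
  finally show ?case .
qed simp

lemma walk_dist_converse: "walk_dist (R\<inverse>) x y = walk_dist R y x"
  by (simp add: walk_dist_def relpow_converse)

lemma rtrancl_along_shortest_walk:
  "(x, y) \<in> R\<^sup>* \<Longrightarrow>
    (x, y) \<in> (R \<inter> {z. z = x \<or> walk_dist R z y < walk_dist R x y}
               \<times> {z. z = x \<or> walk_dist R z y < walk_dist R x y})\<^sup>*"
proof (induction "walk_dist R x y" arbitrary: x rule: less_induct)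
  case less
  let ?Z = "\<lambda>x. {z. z = x \<or> walk_dist R z y < walk_dist R x y}"
  show ?case
  proof (cases "walk_dist R x y")
    case 0
    then show ?thesis using relpow_walk_dist[OF less.prems] by simp
  next
    case (Suc n)
    then obtain z where xz: "(x, z) \<in> R" and zy: "(z, y) \<in> R ^^ n"
      using relpow_walk_dist[OF less.prems] by (metis relpow_Suc_E2)
    then have closer: "walk_dist R z y < walk_dist R x y"
      using walk_dist_le[OF zy] Suc by simp
    have "(z, y) \<in> (R \<inter> ?Z z \<times> ?Z z)\<^sup>*"
      using less.hyps[OF closer] zy by (simp add: relpow_imp_rtrancl)
    moreover have "R \<inter> ?Z z \<times> ?Z z \<subseteq> R \<inter> ?Z x \<times> ?Z x" using closer by auto
    ultimately have "(z, y) \<in> (R \<inter> ?Z x \<times> ?Z x)\<^sup>*" using rtrancl_mono by blast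
    moreover have "(x, z) \<in> R \<inter> ?Z x \<times> ?Z x" using xz closer by auto
    ultimately show ?thesis by (meson converse_rtrancl_into_rtrancl)
  qed
qed

lemma rtrancl_along_shortest_walk':
  assumes "(x, y) \<in> R\<^sup>*"
  defines "Z \<equiv> {z. z = y \<or> walk_dist R x z < walk_dist R x y}"
  shows "(x, y) \<in> (R \<inter> Z \<times> Z)\<^sup>*"
proof -
  have "(y, x) \<in> (R\<inverse>)\<^sup>*" using assms(1) by (simp add: rtrancl_converse)
  then have "(y, x) \<in> (R\<inverse> \<inter> Z \<times> Z)\<^sup>*"
    using rtrancl_along_shortest_walk[of y x "R\<inverse>"] by (simp add: walk_dist_converse Z_def)
  moreover have "R\<inverse> \<inter> Z \<times> Z = (R \<inter> Z \<times> Z)\<inverse>" by auto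
  ultimately show ?thesis by (simp add: rtrancl_converse)
qed

lemma rtrancl_Int_Times_mono:
  assumes "(x, y) \<in> (R \<inter> Z \<times> Z)\<^sup>*" "Z \<subseteq> Y" shows "(x, y) \<in> (R \<inter> Y \<times> Y)\<^sup>*"
  using assms(1) by (rule rev_subsetD[OF _ rtrancl_mono]) (use assms(2) in auto)

lemma exists_dipath_within:
  assumes "(x, y) \<in> (R \<inter> Y \<times> Y)\<^sup>*" "x \<noteq> y"
  shows "\<exists>P. is_dipath R P x y \<and> internal_vertices P \<subseteq> Y - {x, y}"
proof -
  let ?r = "\<lambda>a b. (a, b) \<in> R \<inter> Y \<times> Y"
  have "?r\<^sup>*\<^sup>* x y" using assms(1) unfolding rtrancl_def by simp
  then obtain xs where "rtrancl_path ?r x xs y" by (auto simp: rtranclp_eq_rtrancl_path)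
  then obtain ys where path: "rtrancl_path ?r x ys y" and "distinct (x # ys)"
    by (rule rtrancl_path_distinct)
  have "ys \<noteq> []" using path assms(2) by (auto elim: rtrancl_path.cases)
  have "last ys = y" using rtrancl_path_last[OF path \<open>ys \<noteq> []\<close>] .
  have "set ys \<subseteq> Y" using rtrancl_path_Range[OF path] by auto
  have "is_dipath R (x # ys) x y"
    unfolding is_dipath_def
    using \<open>distinct (x # ys)\<close> \<open>ys \<noteq> []\<close> \<open>last ys = y\<close> rtrancl_path_nth[OF path]
    by (auto simp: Suc_le_eq)
  moreover have "internal_vertices (x # ys) \<subseteq> Y - {x, y}"
  proof -
    have "ys = butlast ys @ [y]" using \<open>ys \<noteq> []\<close> \<open>last ys = y\<close> by (metis append_butlast_last_id)
    then have "distinct (butlast ys @ [y])" using \<open>distinct (x # ys)\<close> by simp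
    then have "y \<notin> set (butlast ys)" by simp
    then show ?thesis
      using \<open>set ys \<subseteq> Y\<close> \<open>distinct (x # ys)\<close>
      by (auto simp: internal_vertices_def dest: in_set_butlastD)
  qed
  ultimately show ?thesis by blast
qed

definition linked_outside :: "('b \<times> 'b) set \<Rightarrow> 'b set \<Rightarrow> bool" where
  "linked_outside R S \<longleftrightarrow>
     (\<forall>x\<in>S. \<forall>y\<in>S. x \<noteq> y \<longrightarrow> (\<exists>Q. is_dipath R Q x y \<and> internal_vertices Q \<inter> S = {}))"

text \<open>Go from x to r and on to y along shortest walks: every vertex after x is strictly closer to r
  than x, and every vertex before y is strictly closer from r than y, so none of them lies in S.\<close>
lemma linked_outside_if_equidistant:
  assumes reach: "\<And>x. x \<in> S \<Longrightarrow> (r, x) \<in> R\<^sup>* \<and> (x, r) \<in> R\<^sup>*"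
    and equi: "\<And>x y. x \<in> S \<Longrightarrow> y \<in> S \<Longrightarrow>
      walk_dist R r x = walk_dist R r y \<and> walk_dist R x r = walk_dist R y r"
  shows "linked_outside R S"
  unfolding linked_outside_def
proof (intro ballI impI)
  fix x y assume "x \<in> S" "y \<in> S" "x \<noteq> y"
  define Y where "Y = - S \<union> {x, y}"
  have "{z. z = x \<or> walk_dist R z r < walk_dist R x r} \<subseteq> Y"
    using equi[OF _ \<open>x \<in> S\<close>] by (force simp: Y_def)
  with rtrancl_along_shortest_walk[of x r R] have "(x, r) \<in> (R \<inter> Y \<times> Y)\<^sup>*"
    using reach[OF \<open>x \<in> S\<close>] by (blast intro: rtrancl_Int_Times_mono)
  moreover have "{z. z = y \<or> walk_dist R r z < walk_dist R r y} \<subseteq> Y"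
    using equi[OF _ \<open>y \<in> S\<close>] by (force simp: Y_def)
  with rtrancl_along_shortest_walk'[of r y R] have "(r, y) \<in> (R \<inter> Y \<times> Y)\<^sup>*"
    using reach[OF \<open>y \<in> S\<close>] by (blast intro: rtrancl_Int_Times_mono)
  ultimately obtain Q where "is_dipath R Q x y" "internal_vertices Q \<subseteq> Y - {x, y}"
    using exists_dipath_within[OF _ \<open>x \<noteq> y\<close>] rtrancl_trans by metis
  then show "\<exists>Q. is_dipath R Q x y \<and> internal_vertices Q \<inter> S = {}"
    by (auto simp: Y_def)
qed

lemma exists_linked_outside_not_colourable:
  assumes "\<not> colourable V R (4 * k)"
  obtains S where "S \<subseteq> V" "\<not> colourable S R k" "linked_outside R S"
proof -
  obtain r C where C: "C \<subseteq> V" "\<not> colourable C R (4 * k)"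
    and reach: "\<forall>x\<in>C. (r, x) \<in> R\<^sup>* \<and> (x, r) \<in> R\<^sup>*"
    by (rule exists_not_colourable_strong_component[OF assms])
  define L where "L i = {x \<in> C. int (walk_dist R r x) = i}" for i
  have step: "\<forall>x\<in>C. \<forall>y\<in>C. (x, y) \<in> R \<longrightarrow> int (walk_dist R r y) \<le> int (walk_dist R r x) + 1"
  proof (intro ballI impI)
    fix x y assume "x \<in> C" "y \<in> C" "(x, y) \<in> R"
    with reach walk_dist_from_le_Suc[of r x R y]
    show "int (walk_dist R r y) \<le> int (walk_dist R r x) + 1" by simp
  qed
  have "\<not> colourable C R (2 * (2 * k))" using C(2) by simp
  then obtain i where Li: "\<not> colourable (L i) R (2 * k)"
    using colourable_double_if_levels_colourable[OF step] unfolding L_def by blast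
  define S where "S j = {x \<in> L i. - int (walk_dist R x r) = j}" for j
  have step': "\<forall>x\<in>L i. \<forall>y\<in>L i. (x, y) \<in> R \<longrightarrow> - int (walk_dist R y r) \<le> - int (walk_dist R x r) + 1"
  proof (intro ballI impI)
    fix x y assume "x \<in> L i" "y \<in> L i" "(x, y) \<in> R"
    with reach walk_dist_to_le_Suc[of y r R x]
    show "- int (walk_dist R y r) \<le> - int (walk_dist R x r) + 1" by (simp add: L_def)
  qed
  obtain j where Sj: "\<not> colourable (S j) R k"
    using colourable_double_if_levels_colourable[OF step'] Li unfolding S_def by blast
  have "linked_outside R (S j)"
    by (rule linked_outside_if_equidistant[of _ r]) (use reach in \<open>auto simp: S_def L_def\<close>)
  moreover have "S j \<subseteq> V" using C(1) by (auto simp: S_def L_def)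
  ultimately show thesis using that Sj by blast
qed

section \<open>Subdivisions\<close>

lemma internal_vertices_subset_Domain:
  assumes "is_dipath R P x y" shows "internal_vertices P \<subseteq> Domain R"
proof
  fix z assume "z \<in> internal_vertices P"
  then obtain j where "j < length P - 2" "z = P ! Suc j"
    by (auto simp: internal_vertices_def in_set_conv_nth nth_butlast nth_tl numeral_2_eq_2)
  then have "Suc (Suc j) < length P" by linarith
  with assms have "(P ! Suc j, P ! Suc (Suc j)) \<in> R" by (simp add: is_dipath_def)
  then show "z \<in> Domain R" using \<open>z = P ! Suc j\<close> by blast
qed

lemma is_dipath_mono: "is_dipath R P x y \<Longrightarrow> R \<subseteq> R' \<Longrightarrow> is_dipath R' P x y"
  unfolding is_dipath_def by blast

lemma contains_subdivision_insert_arc: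
  assumes sub: "contains_subdivision S (AD \<inter> S \<times> S) V A"
    and "S \<subseteq> VD" "linked_outside AD S" "u \<in> V" "v \<in> V" "u \<noteq> v"
  shows "contains_subdivision VD AD V (insert (u, v) A)"
proof -
  obtain \<phi> P where \<phi>: "inj_on \<phi> V" "\<phi> ` V \<subseteq> S"
    and paths: "\<forall>e\<in>A. is_dipath (AD \<inter> S \<times> S) (P e) (\<phi> (fst e)) (\<phi> (snd e)) \<and>
        internal_vertices (P e) \<inter> \<phi> ` V = {}"
    and disjoint: "\<forall>e\<in>A. \<forall>e'\<in>A. e \<noteq> e' \<longrightarrow> internal_vertices (P e) \<inter> internal_vertices (P e') = {}"
    using sub unfolding contains_subdivision_def by (elim exE conjE) (rule that)
  have "\<phi> u \<in> S" "\<phi> v \<in> S" "\<phi> u \<noteq> \<phi> v" using \<phi> assms(4-6) by (auto dest: inj_onD)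
  then obtain Q where Q: "is_dipath AD Q (\<phi> u) (\<phi> v)" "internal_vertices Q \<inter> S = {}"
    using \<open>linked_outside AD S\<close> unfolding linked_outside_def by blast
  have inside: "\<forall>e\<in>A. internal_vertices (P e) \<subseteq> S"
    using internal_vertices_subset_Domain[of "AD \<inter> S \<times> S"] paths by blast
  define P' where "P' = P((u, v) := Q)"
  show ?thesis
    unfolding contains_subdivision_def
  proof (intro exI[of _ \<phi>] exI[of _ P'] conjI ballI impI)
    show "inj_on \<phi> V" "\<phi> ` V \<subseteq> VD" using \<phi> \<open>S \<subseteq> VD\<close> by auto
  next
    fix e assume "e \<in> insert (u, v) A"
    then show "is_dipath AD (P' e) (\<phi> (fst e)) (\<phi> (snd e))"
      "internal_vertices (P' e) \<inter> \<phi> ` V = {}"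
      using Q paths \<phi>(2) is_dipath_mono[of "AD \<inter> S \<times> S" _ _ _ AD] by (auto simp: P'_def)
  next
    fix e e' assume "e \<in> insert (u, v) A" "e' \<in> insert (u, v) A" "e \<noteq> e'"
    then show "internal_vertices (P' e) \<inter> internal_vertices (P' e') = {}"
      using Q(2) disjoint inside unfolding P'_def
      by (cases "e = (u, v)"; cases "e' = (u, v)") (simp_all, blast+)
  qed
qed

lemma contains_subdivision_if_not_colourable:
  fixes VD :: "'b set"
  assumes "is_digraph V A" "is_digraph VD AD"
    and "\<not> colourable VD AD (4 ^ cyclomatic_number V A * (card V - 1))"
  shows "contains_subdivision VD AD V A"
  using assms
proof (induction "card A" arbitrary: A VD AD rule: less_induct)
  case less
  have fin: "finite V" "finite VD" and AV: "A \<subseteq> V \<times> V" and loopless: "\<forall>x. (x, x) \<notin> A" "\<forall>x. (x, x) \<notin> AD"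
    using less.prems(1,2) by (auto simp: is_digraph_def)
  show ?case
  proof (cases "\<exists>(u, v)\<in>A. (u, v) \<in> weak_conn (A - {(u, v)})")
    case False
    then have "oriented_forest V A"
      using less.prems(1) card_arcs_plus_num_cc_le_if_bridges[OF AV fin(1)]
      by (auto simp: oriented_forest_def)
    moreover have "card V - 1 \<le> 4 ^ cyclomatic_number V A * (card V - 1)"
      using mult_le_mono1[of 1 "4 ^ cyclomatic_number V A" "card V - 1"] by simp
    then have "\<not> colourable VD AD (card V - 1)"
      using less.prems(3) colourable_mono by blast
    ultimately show ?thesis using contains_subdivision_oriented_forest fin(2) loopless(2) by blast
  next
    case True
    then obtain u v where uv: "(u, v) \<in> A" "(u, v) \<in> weak_conn (A - {(u, v)})" by blast
    define A0 where "A0 = A - {(u, v)}"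
    define k where "k = 4 ^ cyclomatic_number V A0 * (card V - 1)"
    have "cyclomatic_number V A = Suc (cyclomatic_number V A0)"
      unfolding A0_def by (rule cyclomatic_number_remove_cycle_arc[OF AV fin(1) uv])
    then have "\<not> colourable VD AD (4 * k)" using less.prems(3) by (simp add: k_def mult.assoc)
    then obtain S where S: "S \<subseteq> VD" "\<not> colourable S AD k" "linked_outside AD S"
      by (rule exists_linked_outside_not_colourable)
    have "is_digraph S (AD \<inter> S \<times> S)"
      using S(1) fin(2) loopless(2) finite_subset by (auto simp: is_digraph_def)
    moreover have "is_digraph V A0" using less.prems(1) by (auto simp: is_digraph_def A0_def)
    moreover have "card A0 < card A"
      unfolding A0_def using finite_subset[OF AV] fin(1) uv(1) by (intro card_Diff1_less) auto
    moreover have "\<not> colourable S (AD \<inter> S \<times> S) k" using S(2) by (simp add: colourable_Int_Times)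
    ultimately have "contains_subdivision S (AD \<inter> S \<times> S) V A0"
      using less.hyps by (simp add: k_def)
    moreover have "u \<in> V" "v \<in> V" "u \<noteq> v" using uv(1) AV loopless(1) by auto
    moreover have "A = insert (u, v) A0" using uv(1) by (auto simp: A0_def)
    ultimately show ?thesis using contains_subdivision_insert_arc S(1,3) by metis
  qed
qed

theorem corollary36:
  fixes V :: "'a set" and A :: "('a \<times> 'a) set"
  assumes "is_digraph V A"
  shows "int (mad_chi V A) \<le> 4 ^ (card A + num_cc V A - card V) * (int (card V) - 1) + 1"
proof (cases "V = {}")
  case True
  then have "A = {}" using assms by (auto simp: is_digraph_def)
  have "contains_subdivision VD AD V A" for VD :: "nat set" and AD
    using True \<open>A = {}\<close> by (simp add: contains_subdivision_def)
  then have "mad_chi V A = 0" unfolding mad_chi_def by (intro Least_eq_0) blast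
  then show ?thesis using True \<open>A = {}\<close> by (simp add: num_cc_empty)
next
  case False
  define c where "c = 4 ^ cyclomatic_number V A * (card V - 1) + 1"
  have "contains_subdivision VD AD V A"
    if "is_digraph VD AD" "c \<le> dichromatic VD AD" for VD :: "nat set" and AD
    using contains_subdivision_if_not_colourable[OF assms that(1)]
      not_colourable_if_dichromatic_ge[OF that(2)] by (simp add: c_def)
  then have "int (mad_chi V A) \<le> int c" unfolding mad_chi_def by (simp add: Least_le)
  also have "\<dots> = 4 ^ cyclomatic_number V A * (int (card V) - 1) + 1"
    using False assms by (simp add: c_def of_nat_diff is_digraph_def Suc_le_eq card_gt_0_iff)
  finally show ?thesis by (simp add: cyclomatic_number_def)
qed

end
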